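(* In the abstract boundary problem setting described in the context, the operators $\gamma_0,\gamma_1:H_1\to K$ extend by continuity to bounded operators $\Gamma_0,\Gamma_1:\mathcal D(T^* )\to K'$ (with $\mathcal D(T^* )$ carrying the graph topology), and $$\langle T^*u,v\rangle-\langle u,T^*v\rangle=\langle \Gamma_1u,\Gamma_0v\rangle_{K',K}-\langle\Gamma_0u,\Gamma_1v\rangle_{K',K}$$ for every $u\in\mathcal D(T^* )$ and $v\in H_1$.
   Context: Inner products are linear in the first argument and conjugate-linear in the second. Let $H_0$ be a separable Hilbert space with inner product $\langle\cdot,\cdot\rangle$, let $T$ be a closed densely defined symmetric operator in $H_0$ with adjoint $T^*$, and equip $\mathcal D(T^* )$ with the graph norm. Let $H_1\subset H_0$ be a dense subspace which is a Hilbert space in its own right with bounded inclusion $H_1\to H_0$. Let $K^\partial$ be a separable Hilbert space with inner product $\langle\cdot,\cdot\rangle_\partial$ and $K\subset K^\partial$ a dense subspace which is a Hilbert space in its own right with bounded inclusion. Let $K'$ be the space of continuous anti-linear functionals on $K$ (a Hilbert space with the dual norm); $K^\partial$ is regarded as a dense subspace of $K'$ via $y\mapsto(x\mapsto\langle y,x\rangle_\partial)$, so $K\subset K^\partial\subset K'$. For $y\in K'$, $x\in K$ put $\langle y,x\rangle_{K',K}=y(x)$ and $\langle x,y\rangle_{K,K'}=\overline{y(x)}$; these agree with $\langle\cdot,\cdot\rangle_\partial$ when $y\in K^\partial$. Standing assumptions: $H_1\subset\mathcal D(T^* )$ and $H_1$ is dense in $\mathcal D(T^* )$ in the graph norm;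 $T^*|_{H_1}:H_1\to H_0$ is bounded; $\gamma_0,\gamma_1:H_1\to K$ are bounded linear operators such that $\gamma=\gamma_0\oplus\gamma_1:H_1\to K\oplus K$ is surjective; $\operatorname{Ker}\gamma$ is dense in $H_0$ and $\mathcal D(T)=\operatorname{Ker}\gamma$; and the Lagrange identity $\langle T^*u,v\rangle-\langle u,T^*v\rangle=\langle\gamma_1u,\gamma_0v\rangle_\partial-\langle\gamma_0u,\gamma_1v\rangle_\partial$ holds for all $u,v\in H_1$. *)

theory Defs
  imports "HOL-Analysis.Analysis"
begin

class cvec = real_vector +
  fixes cscale :: "complex \<Rightarrow> 'a \<Rightarrow> 'a" (infixr \<open>*\<^sub>C\<close> 75)
  assumes cscale_add_right: "a *\<^sub>C (x + y) = a *\<^sub>C x + a *\<^sub>C y"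
    and cscale_add_left: "(a + b) *\<^sub>C x = a *\<^sub>C x + b *\<^sub>C x"
    and cscale_cscale: "a *\<^sub>C (b *\<^sub>C x) = (a * b) *\<^sub>C x"
    and cscale_one: "1 *\<^sub>C x = x"
    and scaleR_cscale: "r *\<^sub>R x = complex_of_real r *\<^sub>C x"

class chilbert = cvec + banach +
  fixes cinner :: "'a \<Rightarrow> 'a \<Rightarrow> complex"
  assumes cinner_add_left: "cinner (x + y) z = cinner x z + cinner y z"
    and cinner_cscale_left: "cinner (a *\<^sub>C x) y = a * cinner x y"
    and cinner_commute: "cinner y x = cnj (cinner x y)"
    and cinner_self_norm: "cinner x x = complex_of_real ((norm x)\<^sup>2)"

definition csubspace :: "'a::cvec set \<Rightarrow> bool" where
  "csubspace S \<longleftrightarrow> 0 \<in> S \<and> (\<forall>x\<in>S. \<forall>y\<in>S. x + y \<in> S) \<and> (\<forall>c. \<forall>x\<in>S. c *\<^sub>C x \<in> S)"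

definition clinear_on :: "'a::cvec set \<Rightarrow> ('a \<Rightarrow> 'b::cvec) \<Rightarrow> bool" where
  "clinear_on S f \<longleftrightarrow> (\<forall>x\<in>S. \<forall>y\<in>S. f (x + y) = f x + f y) \<and> (\<forall>c. \<forall>x\<in>S. f (c *\<^sub>C x) = c *\<^sub>C f x)"

definition bounded_clinear_map :: "('a::{cvec,real_normed_vector} \<Rightarrow> 'b::{cvec,real_normed_vector}) \<Rightarrow> bool" where
  "bounded_clinear_map f \<longleftrightarrow> clinear_on UNIV f \<and> (\<exists>C. \<forall>x. norm (f x) \<le> C * norm x)"

definition antidual :: "('k::{cvec,real_normed_vector} \<Rightarrow> complex) set" where
  "antidual = {f. (\<forall>x y. f (x + y) = f x + f y) \<and> (\<forall>c x. f (c *\<^sub>C x) = cnj c * f x)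
                  \<and> (\<exists>C. \<forall>x. cmod (f x) \<le> C * norm x)}"

text \<open>Adjoint of the operator T with domain D (T densely defined, so the value is unique).\<close>
definition adj_dom :: "'a::chilbert set \<Rightarrow> ('a \<Rightarrow> 'a) \<Rightarrow> 'a set" where
  "adj_dom D T = {v. \<exists>w. \<forall>u\<in>D. cinner (T u) v = cinner u w}"

definition adj :: "'a::chilbert set \<Rightarrow> ('a \<Rightarrow> 'a) \<Rightarrow> 'a \<Rightarrow> 'a" where
  "adj D T v = (THE w. \<forall>u\<in>D. cinner (T u) v = cinner u w)"

definition closed_op :: "'a::chilbert set \<Rightarrow> ('a \<Rightarrow> 'a) \<Rightarrow> bool" where
  "closed_op D T \<longleftrightarrow> closed {(u, T u) | u. u \<in> D}"

definition symmetric_op :: "'a::chilbert set \<Rightarrow> ('a \<Rightarrow> 'a) \<Rightarrow> bool" where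
  "symmetric_op D T \<longleftrightarrow> (\<forall>u\<in>D. \<forall>v\<in>D. cinner (T u) v = cinner u (T v))"

definition graph_norm :: "('a::real_normed_vector \<Rightarrow> 'a) \<Rightarrow> 'a \<Rightarrow> real" where
  "graph_norm S u = sqrt ((norm u)\<^sup>2 + (norm (S u))\<^sup>2)"

end

theory Submission
  imports Defs
begin

text \<open>
  For \<open>u \<in> \<D>(T\<^sup>*)\<close> consider the boundary form
  \<open>v \<mapsto> \<langle>T\<^sup>*u, v\<rangle> - \<langle>u, T\<^sup>*v\<rangle>\<close> on \<open>H\<^sub>1\<close>. It vanishes on
  \<open>Ker \<gamma> = \<D>(T)\<close> because \<open>T \<subseteq> T\<^sup>*\<close>, and it is bounded by the graph norm of \<open>u\<close>
  times the \<open>H\<^sub>1\<close>-norm of \<open>v\<close> since \<open>T\<^sup>*\<close> is bounded on \<open>H\<^sub>1\<close>. Hence it only depends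
  on \<open>\<gamma> v = (\<gamma>\<^sub>0 v, \<gamma>\<^sub>1 v)\<close>. By the open mapping theorem (proved below from Baire's
  theorem) the surjection \<open>\<gamma> : H\<^sub>1 \<rightarrow> K \<oplus> K\<close> has a bounded right inverse \<open>R\<close>;
  evaluating the boundary form at \<open>R(k, 0)\<close> and \<open>-R(0, k)\<close> defines \<open>\<Gamma>\<^sub>1 u\<close> and
  \<open>\<Gamma>\<^sub>0 u\<close>, anti-linear and bounded in \<open>k\<close>. Green's formula for \<open>v \<in> H\<^sub>1\<close> is the
  decomposition \<open>\<gamma> v = (\<gamma>\<^sub>0 v, 0) + (0, \<gamma>\<^sub>1 v)\<close>, and on \<open>H\<^sub>1\<close> the Lagrange identity
  shows that \<open>\<Gamma>\<^sub>i\<close> extends \<open>\<gamma>\<^sub>i\<close>.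
\<close>

lemma cscale_zero [simp]: "c *\<^sub>C (0::'a::cvec) = 0"
  by (metis add_cancel_right_right cscale_add_right add_0)

lemma cinner_add_right: "cinner x (y + z) = cinner x y + cinner (x::'a::chilbert) z"
  by (metis cinner_commute cinner_add_left complex_cnj_add)

lemma cinner_cscale_right: "cinner x (c *\<^sub>C y) = cnj c * cinner (x::'a::chilbert) y"
  by (metis cinner_commute cinner_cscale_left complex_cnj_mult complex_cnj_cnj)

lemma cinner_scaleR_left: "cinner (r *\<^sub>R x) (y::'a::chilbert) = of_real r * cinner x y"
  by (simp add: scaleR_cscale cinner_cscale_left)

lemma cinner_scaleR_right: "cinner x (r *\<^sub>R (y::'a::chilbert)) = of_real r * cinner x y"
  by (simp add: scaleR_cscale cinner_cscale_right)

lemma cinner_zero_left [simp]: "cinner 0 (y::'a::chilbert) = 0"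
  using cinner_scaleR_left[of 0 0 y] by simp

lemma cinner_zero_right [simp]: "cinner (x::'a::chilbert) 0 = 0"
  using cinner_scaleR_right[of x 0 0] by simp

lemma cinner_diff_left: "cinner (x - y) (z::'a::chilbert) = cinner x z - cinner y z"
  by (metis add_diff_cancel cinner_add_left diff_add_cancel)

lemma cinner_diff_right: "cinner x (y - (z::'a::chilbert)) = cinner x y - cinner x z"
  by (metis add_diff_cancel cinner_add_right diff_add_cancel)

lemma Re_cinner_self: "Re (cinner x (x::'a::chilbert)) = (norm x)\<^sup>2"
  by (simp add: cinner_self_norm)

lemma norm_cscale: "norm (c *\<^sub>C (x::'a::chilbert)) = cmod c * norm x"
proof -
  have "cinner (c *\<^sub>C x) (c *\<^sub>C x) = (c * cnj c) * cinner x x"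
    by (simp add: cinner_cscale_left cinner_cscale_right)
  then have "of_real ((norm (c *\<^sub>C x))\<^sup>2) = (of_real ((cmod c * norm x)\<^sup>2) :: complex)"
    by (simp add: cinner_self_norm power_mult_distrib flip: complex_norm_square)
  then have "(norm (c *\<^sub>C x))\<^sup>2 = (cmod c * norm x)\<^sup>2"
    using of_real_eq_iff by blast
  then show ?thesis by (simp add: power2_eq_iff_nonneg)
qed

lemma Re_cinner_le: "Re (cinner x (y::'a::chilbert)) \<le> norm x * norm y"
proof -
  define a b where "a = norm x" and "b = norm y"
  have "0 \<le> Re (cinner (b *\<^sub>R x - a *\<^sub>R y) (b *\<^sub>R x - a *\<^sub>R y))"
    by (simp add: Re_cinner_self)
  also have "\<dots> = 2 * (a * b) * (a * b - Re (cinner x y))"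
    using cinner_commute[of x y]
    by (simp add: cinner_diff_left cinner_diff_right cinner_scaleR_left cinner_scaleR_right
        Re_cinner_self a_def b_def power2_eq_square algebra_simps)
  finally have nonneg: "0 \<le> (a * b) * (a * b - Re (cinner x y))"
    by simp
  show ?thesis
  proof (cases "x = 0 \<or> y = 0")
    case False
    then have "a * b > 0"
      by (simp add: a_def b_def)
    with nonneg have "0 \<le> a * b - Re (cinner x y)"
      by (simp add: zero_le_mult_iff)
    then show ?thesis
      by (simp add: a_def b_def)
  qed auto
qed

lemma cinner_cauchy_schwarz: "cmod (cinner x (y::'a::chilbert)) \<le> norm x * norm y"
proof (cases "cinner x y = 0")
  case False
  define c where "c = cinner x y / cmod (cinner x y)"
  have "cinner x (c *\<^sub>C y) = cmod (cinner x y)"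
    using False
    by (simp add: c_def cinner_cscale_right field_simps power2_eq_square flip: complex_norm_square)
  moreover have "cmod c = 1"
    using False by (simp add: c_def norm_divide)
  ultimately show ?thesis
    using Re_cinner_le[of x "c *\<^sub>C y"] by (simp add: norm_cscale)
qed simp

lemma bounded_clinear_map_add: "bounded_clinear_map f \<Longrightarrow> f (x + y) = f x + f y"
  by (simp add: bounded_clinear_map_def clinear_on_def)

lemma bounded_clinear_map_cscale: "bounded_clinear_map f \<Longrightarrow> f (c *\<^sub>C x) = c *\<^sub>C f x"
  by (simp add: bounded_clinear_map_def clinear_on_def)

lemma bounded_clinear_map_diff: "bounded_clinear_map f \<Longrightarrow> f (x - y) = f x - f y"
  by (metis bounded_clinear_map_add diff_add_cancel eq_diff_eq)

lemma bounded_clinear_map_zero: "bounded_clinear_map f \<Longrightarrow> f 0 = 0"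
  using bounded_clinear_map_diff[of f 0 0] by simp

lemma bounded_linear_if_bounded_clinear_map:
  assumes "bounded_clinear_map f"
  shows "bounded_linear f"
proof -
  obtain C where "\<forall>x. norm (f x) \<le> C * norm x"
    using assms by (auto simp: bounded_clinear_map_def)
  then show ?thesis
    by (intro bounded_linear_intro[where K = C])
      (simp_all add: bounded_clinear_map_add[OF assms] bounded_clinear_map_cscale[OF assms]
        scaleR_cscale mult.commute)
qed

lemma antidualI:
  assumes "\<And>x y. f (x + y) = f x + f y" and "\<And>c x. f (c *\<^sub>C x) = cnj c * f x"
    and "\<And>x. cmod (f x) \<le> C * norm x"
  shows "f \<in> antidual"
  using assms by (auto simp: antidual_def)

lemma bounded_linear_cinner_left: "bounded_linear (\<lambda>x::'a::chilbert. cinner x y)"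
  by (intro bounded_linear_intro[where K = "norm y"])
    (simp_all add: cinner_add_left cinner_scaleR_left scaleR_conv_of_real cinner_cauchy_schwarz)

lemma cinner_eq_on_dense_imp_eq:
  fixes w w' :: "'a::chilbert"
  assumes "closure D = UNIV" and "\<forall>d\<in>D. cinner d w = cinner d w'"
  shows "w = w'"
proof -
  have "closed {x. cinner x (w - w') = 0}"
    by (intro closed_Collect_eq linear_continuous_on bounded_linear_cinner_left) simp
  moreover have "D \<subseteq> {x. cinner x (w - w') = 0}"
    using assms(2) by (simp add: subset_eq cinner_diff_right)
  ultimately have "closure D \<subseteq> {x. cinner x (w - w') = 0}"
    by (rule closure_minimal[rotated])
  then have "cinner (w - w') (w - w') = 0"
    using assms(1) by blast
  then show ?thesis
    by (simp add: cinner_self_norm)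
qed

lemma adj_eqI:
  assumes dense: "closure D = UNIV" and adj: "\<forall>d\<in>D. cinner (T d) v = cinner d w"
  shows "v \<in> adj_dom D T" and "adj D T v = w"
proof -
  show "v \<in> adj_dom D T"
    using adj by (auto simp: adj_dom_def)
  show "adj D T v = w"
    unfolding adj_def
  proof (rule the_equality)
    fix w' assume "\<forall>d\<in>D. cinner (T d) v = cinner d w'"
    with adj show "w' = w"
      by (intro cinner_eq_on_dense_imp_eq[OF dense]) simp
  qed (rule adj)
qed

lemma cinner_adj:
  assumes "closure D = UNIV" and "v \<in> adj_dom D T" and "d \<in> D"
  shows "cinner (T d) v = cinner d (adj D T v)"
proof -
  obtain w where w: "\<forall>d\<in>D. cinner (T d) v = cinner d w"
    using assms(2) by (auto simp: adj_dom_def)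
  with assms(1) have "adj D T v = w"
    by (rule adj_eqI)
  with w assms(3) show ?thesis
    by simp
qed

lemma adj_add:
  assumes "closure D = UNIV" and "u \<in> adj_dom D T" and "v \<in> adj_dom D T"
  shows "u + v \<in> adj_dom D T" and "adj D T (u + v) = adj D T u + adj D T v"
proof -
  have "\<forall>d\<in>D. cinner (T d) (u + v) = cinner d (adj D T u + adj D T v)"
    using assms by (simp add: cinner_add_right cinner_adj)
  with assms(1) show "u + v \<in> adj_dom D T" "adj D T (u + v) = adj D T u + adj D T v"
    by (rule adj_eqI)+
qed

lemma adj_cscale:
  assumes "closure D = UNIV" and "u \<in> adj_dom D T"
  shows "c *\<^sub>C u \<in> adj_dom D T" and "adj D T (c *\<^sub>C u) = c *\<^sub>C adj D T u"
proof -
  have "\<forall>d\<in>D. cinner (T d) (c *\<^sub>C u) = cinner d (c *\<^sub>C adj D T u)"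
    using assms by (simp add: cinner_cscale_right cinner_adj)
  with assms(1) show "c *\<^sub>C u \<in> adj_dom D T" "adj D T (c *\<^sub>C u) = c *\<^sub>C adj D T u"
    by (rule adj_eqI)+
qed

lemma symmetric_op_adj:
  assumes "closure D = UNIV" and "symmetric_op D T" and "d \<in> D"
  shows "d \<in> adj_dom D T" and "adj D T d = T d"
proof -
  have "\<forall>d'\<in>D. cinner (T d') d = cinner d' (T d)"
    using assms by (simp add: symmetric_op_def)
  with assms(1) show "d \<in> adj_dom D T" "adj D T d = T d"
    by (rule adj_eqI)+
qed

definition boundary_form :: "'a::chilbert set \<Rightarrow> ('a \<Rightarrow> 'a) \<Rightarrow> 'a \<Rightarrow> 'a \<Rightarrow> complex" where
  "boundary_form D T u v = cinner (adj D T u) v - cinner u (adj D T v)"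

lemma boundary_form_add_left:
  assumes "closure D = UNIV" and "u \<in> adj_dom D T" and "u' \<in> adj_dom D T"
  shows "boundary_form D T (u + u') v = boundary_form D T u v + boundary_form D T u' v"
  using assms by (simp add: boundary_form_def adj_add cinner_add_left)

lemma boundary_form_cscale_left:
  assumes "closure D = UNIV" and "u \<in> adj_dom D T"
  shows "boundary_form D T (c *\<^sub>C u) v = c * boundary_form D T u v"
  using assms by (simp add: boundary_form_def adj_cscale cinner_cscale_left right_diff_distrib)

lemma boundary_form_add_right:
  assumes "closure D = UNIV" and "v \<in> adj_dom D T" and "v' \<in> adj_dom D T"
  shows "boundary_form D T u (v + v') = boundary_form D T u v + boundary_form D T u v'"
  using assms by (simp add: boundary_form_def adj_add cinner_add_right)

lemma boundary_form_cscale_right: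
  assumes "closure D = UNIV" and "v \<in> adj_dom D T"
  shows "boundary_form D T u (c *\<^sub>C v) = cnj c * boundary_form D T u v"
  using assms by (simp add: boundary_form_def adj_cscale cinner_cscale_right right_diff_distrib)

lemma boundary_form_eq_0:
  assumes "closure D = UNIV" and "symmetric_op D T" and "u \<in> adj_dom D T" and "d \<in> D"
  shows "boundary_form D T u d = 0"
proof -
  have "cinner (adj D T u) d = cnj (cinner (T d) u)"
    using assms by (simp add: cinner_adj cinner_commute[of d])
  also have "\<dots> = cinner u (adj D T d)"
    using assms by (simp add: symmetric_op_adj cinner_commute[of u])
  finally show ?thesis
    by (simp add: boundary_form_def)
qed

lemma norm_le_graph_norm: "norm u \<le> graph_norm S u"
  unfolding graph_norm_def by (rule real_le_rsqrt) simp

lemma norm_apply_le_graph_norm: "norm (S u) \<le> graph_norm S u"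
  unfolding graph_norm_def by (rule real_le_rsqrt) simp

lemma graph_norm_nonneg: "0 \<le> graph_norm S u"
  by (simp add: graph_norm_def)

lemma boundary_form_bound:
  "cmod (boundary_form D T u v) \<le> graph_norm (adj D T) u * (norm v + norm (adj D T v))"
proof -
  have "cmod (boundary_form D T u v) \<le> norm (adj D T u) * norm v + norm u * norm (adj D T v)"
    unfolding boundary_form_def
    by (rule order_trans[OF norm_triangle_ineq4 add_mono]) (rule cinner_cauchy_schwarz)+
  also have "\<dots> \<le> graph_norm (adj D T) u * norm v + graph_norm (adj D T) u * norm (adj D T v)"
    by (intro add_mono mult_right_mono norm_le_graph_norm norm_apply_le_graph_norm) simp_all
  finally show ?thesis
    by (simp add: distrib_left)
qed

lemma surj_closure_image_ball_has_interior:
  fixes f :: "'a::real_normed_vector \<Rightarrow> 'b::banach"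
  assumes "surj f"
  obtains s y r where "r > 0" and "ball y r \<subseteq> closure (f ` ball 0 s)"
proof -
  define G where "G = range (\<lambda>n::nat. closure (f ` ball 0 (real n)))"
  have "y \<in> \<Union>G" for y
  proof -
    obtain x where "y = f x"
      using assms by (metis surjD)
    moreover obtain n :: nat where "norm x < real n"
      using reals_Archimedean2 by blast
    ultimately have "y \<in> closure (f ` ball 0 (real n))"
      using closure_subset by fastforce
    then show ?thesis
      by (auto simp: G_def)
  qed
  then have "\<Union>G = UNIV"
    by blast
  have "\<exists>T\<in>G. interior T \<noteq> {}"
  proof (rule ccontr)
    assume "\<not> (\<exists>T\<in>G. interior T \<noteq> {})"
    then have "euclidean interior_of \<Union>G = {}"
      by (intro Baire_category_alt) (auto simp: G_def completely_metrizable_space_euclidean)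
    with \<open>\<Union>G = UNIV\<close> show False
      by simp
  qed
  then obtain s y where "y \<in> interior (closure (f ` ball 0 s))"
    by (auto simp: G_def)
  then obtain r where "r > 0" "ball y r \<subseteq> interior (closure (f ` ball 0 s))"
    using open_contains_ball open_interior by blast
  with interior_subset show ?thesis
    by (blast intro: that)
qed

lemma uminus_image_ball_0: "uminus ` ball 0 r = ball (0::'a::real_normed_vector) r"
proof
  show "ball 0 r \<subseteq> uminus ` ball (0::'a) r"
  proof
    fix x :: 'a assume "x \<in> ball 0 r"
    then show "x \<in> uminus ` ball 0 r"
      by (intro image_eqI[of x uminus "- x"]) (auto simp: dist_norm)
  qed
qed (auto simp: dist_norm)

lemma linear_ball_subset_closure_image_ball:
  fixes f :: "'a::real_normed_vector \<Rightarrow> 'b::real_normed_vector"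
  assumes f: "linear f" and ball: "ball y r \<subseteq> closure (f ` ball 0 s)"
  shows "ball 0 r \<subseteq> closure (f ` ball 0 (2 * s))"
proof
  fix z :: 'b assume z: "z \<in> ball 0 r"
  define K where "K = f ` ball 0 s"
  have "uminus ` K = f ` uminus ` ball 0 s"
    by (simp add: K_def image_image linear_neg[OF f])
  then have "uminus ` K = K"
    by (simp add: K_def uminus_image_ball_0)
  moreover have "y \<in> closure K"
  proof -
    have "r > 0"
      using z by (auto intro: le_less_trans[OF norm_ge_zero])
    with ball show ?thesis
      by (auto simp: K_def)
  qed
  ultimately have "- y \<in> closure K"
    using closure_bounded_linear_image_subset[OF bounded_linear_minus[OF bounded_linear_ident], of K]
    by auto
  moreover have "y + z \<in> closure K"
    using z ball by (auto simp: K_def subset_eq dist_norm)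
  ultimately have "z \<in> closure K + closure K"
    by (metis add.commute diff_add_cancel diff_conv_add_uminus set_plus_intro)
  also have "\<dots> \<subseteq> closure (K + K)"
    by (rule closure_sum)
  also have "\<dots> \<subseteq> closure (f ` ball 0 (2 * s))"
  proof (intro closure_mono subsetI)
    fix w assume "w \<in> K + K"
    then obtain a b where "a \<in> ball 0 s" "b \<in> ball 0 s" "w = f (a + b)"
      by (auto simp: K_def set_plus_def linear_add[OF f])
    moreover have "norm (a + b) < 2 * s"
      using \<open>a \<in> ball 0 s\<close> \<open>b \<in> ball 0 s\<close> by (intro norm_triangle_lt) simp
    ultimately show "w \<in> f ` ball 0 (2 * s)"
      by auto
  qed
  finally show "z \<in> closure (f ` ball 0 (2 * s))" .
qed

lemma surj_linear_halving_preimage: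
  fixes f :: "'a::real_normed_vector \<Rightarrow> 'b::banach"
  assumes f: "linear f" and "surj f"
  shows "\<exists>M\<ge>0. \<forall>y. \<exists>x. norm x \<le> M * norm y \<and> norm (y - f x) \<le> norm y / 2"
proof -
  obtain s y0 r where r: "r > 0" and "ball y0 r \<subseteq> closure (f ` ball 0 s)"
    using surj_closure_image_ball_has_interior[OF \<open>surj f\<close>] .
  then have ball: "ball 0 r \<subseteq> closure (f ` ball 0 (2 * s))"
    using linear_ball_subset_closure_image_ball[OF f] by blast
  then have "0 \<in> closure (f ` ball 0 (2 * s))"
    using r by auto
  then have s: "s > 0"
  proof (rule contrapos_pp)
    assume "\<not> s > 0"
    then have "ball (0::'a) (2 * s) = {}"
      by simp
    then show "0 \<notin> closure (f ` ball 0 (2 * s))"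
      by (metis closure_empty empty_iff image_empty)
  qed
  have "\<exists>x. norm x \<le> (4 * s / r) * norm y \<and> norm (y - f x) \<le> norm y / 2" for y
  proof (cases "y = 0")
    case False
    define t where "t = 2 * norm y / r"
    have t: "t > 0"
      using False r by (simp add: t_def)
    have "(1 / t) *\<^sub>R y \<in> closure (f ` ball 0 (2 * s))"
      using ball r t by (auto simp: t_def)
    moreover have "r / 4 > 0"
      using r by simp
    ultimately obtain x where x: "norm x < 2 * s" "dist (f x) ((1 / t) *\<^sub>R y) < r / 4"
      unfolding closure_approachable by fastforce
    have "norm (t *\<^sub>R x) \<le> (4 * s / r) * norm y"
      using x(1) t r by (simp add: t_def field_simps)
    moreover have "y - f (t *\<^sub>R x) = t *\<^sub>R ((1 / t) *\<^sub>R y - f x)"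
      using t by (simp add: linear_scale[OF f] scaleR_right_diff_distrib)
    then have "norm (y - f (t *\<^sub>R x)) = t * dist (f x) ((1 / t) *\<^sub>R y)"
      using t by (simp add: dist_norm norm_minus_commute)
    moreover have "t * dist (f x) ((1 / t) *\<^sub>R y) \<le> norm y / 2"
      using x(2) t r by (simp add: t_def field_simps)
    ultimately show ?thesis
      by (intro exI[of _ "t *\<^sub>R x"]) simp
  qed (simp add: linear_0[OF f])
  with r s show ?thesis
    by (intro exI[of _ "4 * s / r"]) auto
qed

lemma bounded_linear_preimage_by_halving:
  fixes f :: "'a::banach \<Rightarrow> 'b::real_normed_vector"
  assumes "bounded_linear f" and M: "M \<ge> 0"
    and g_le: "\<And>y. norm (g y) \<le> M * norm y"
    and g_half: "\<And>y. norm (y - f (g y)) \<le> norm y / 2"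
  shows "\<exists>x. f x = y \<and> norm x \<le> 2 * M * norm y"
proof -
  interpret f: bounded_linear f
    by fact
  define ys where "ys k = ((\<lambda>z. z - f (g z)) ^^ k) y" for k
  have ys_Suc: "ys (Suc k) = ys k - f (g (ys k))" for k
    by (simp add: ys_def)
  have ys_le: "norm (ys k) \<le> norm y * (1 / 2) ^ k" for k
  proof (induction k)
    case (Suc k)
    then show ?case
      using g_half[of "ys k"] by (simp add: ys_Suc)
  qed (simp add: ys_def)
  have xs_le: "norm (g (ys k)) \<le> M * norm y * (1 / 2) ^ k" for k
    using g_le[of "ys k"] mult_left_mono[OF ys_le[of k] M] by (simp add: mult.assoc)
  have geometric: "summable (\<lambda>k. M * norm y * (1 / 2 :: real) ^ k)"
    by (intro summable_mult summable_geometric) simp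
  have norm_summable: "summable (\<lambda>k. norm (g (ys k)))"
    by (rule summable_comparison_test'[OF geometric]) (simp add: xs_le)
  have "ys \<longlonglongrightarrow> 0"
  proof (rule Lim_null_comparison)
    show "\<forall>\<^sub>F k in sequentially. norm (ys k) \<le> norm y * (1 / 2) ^ k"
      by (simp add: ys_le)
    show "(\<lambda>k. norm y * (1 / 2 :: real) ^ k) \<longlonglongrightarrow> 0"
      by (intro tendsto_mult_right_zero LIMSEQ_realpow_zero) auto
  qed
  then have "(\<lambda>k. ys k - ys (Suc k)) sums (ys 0 - 0)"
    by (rule telescope_sums')
  then have "(\<lambda>k. f (g (ys k))) sums y"
    by (simp add: ys_Suc ys_def)
  moreover have "(\<lambda>k. f (g (ys k))) sums f (\<Sum>k. g (ys k))"
    by (intro f.sums summable_sums summable_norm_cancel[OF norm_summable])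
  ultimately have "f (\<Sum>k. g (ys k)) = y"
    by (simp add: sums_unique2)
  moreover have "norm (\<Sum>k. g (ys k)) \<le> (\<Sum>k. M * norm y * (1 / 2 :: real) ^ k)"
    using summable_norm[OF norm_summable] suminf_le[OF xs_le norm_summable geometric]
    by linarith
  moreover have "(\<Sum>k. M * norm y * (1 / 2 :: real) ^ k) = 2 * M * norm y"
    by (simp add: suminf_mult suminf_geometric)
  ultimately show ?thesis
    by auto
qed

lemma bounded_linear_surj_bounded_preimage:
  fixes f :: "'a::banach \<Rightarrow> 'b::banach"
  assumes f: "bounded_linear f" and "surj f"
  shows "\<exists>M\<ge>0. \<forall>y. \<exists>x. f x = y \<and> norm x \<le> M * norm y"
proof -
  obtain M where M: "M \<ge> 0" and "\<forall>y. \<exists>x. norm x \<le> M * norm y \<and> norm (y - f x) \<le> norm y / 2"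
    using surj_linear_halving_preimage[OF bounded_linear.linear[OF f] \<open>surj f\<close>] by blast
  then obtain g where "\<And>y. norm (g y) \<le> M * norm y" and "\<And>y. norm (y - f (g y)) \<le> norm y / 2"
    by metis
  then have "\<forall>y. \<exists>x. f x = y \<and> norm x \<le> 2 * M * norm y"
    using bounded_linear_preimage_by_halving[OF f M] by blast
  with M show ?thesis
    by (intro exI[of _ "2 * M"]) simp
qed

locale abstract_boundary_problem =
  fixes T :: "'h::chilbert \<Rightarrow> 'h" and DT :: "'h set"
    and \<iota> :: "'g::chilbert \<Rightarrow> 'h"
    and j :: "'k::chilbert \<Rightarrow> 'd::chilbert"
    and \<gamma>0 \<gamma>1 :: "'g \<Rightarrow> 'k"
  assumes dense_dom: "closure DT = UNIV"
    and symmetric: "symmetric_op DT T"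
    and incl: "bounded_clinear_map \<iota>"
    and incl_adj_dom: "range \<iota> \<subseteq> adj_dom DT T"
    and adj_incl_bounded: "\<exists>C. \<forall>x. norm (adj DT T (\<iota> x)) \<le> C * norm x"
    and trace0: "bounded_clinear_map \<gamma>0" and trace1: "bounded_clinear_map \<gamma>1"
    and trace_surj: "\<forall>a b. \<exists>x. \<gamma>0 x = a \<and> \<gamma>1 x = b"
    and trace_kernel: "\<iota> ` {x. \<gamma>0 x = 0 \<and> \<gamma>1 x = 0} \<subseteq> DT"
    and boundary_incl: "bounded_clinear_map j"
    and lagrange: "\<forall>u v. boundary_form DT T (\<iota> u) (\<iota> v)
                     = cinner (j (\<gamma>1 u)) (j (\<gamma>0 v)) - cinner (j (\<gamma>0 u)) (j (\<gamma>1 v))"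
begin

lemma incl_mem_adj_dom [simp]: "\<iota> x \<in> adj_dom DT T"
  using incl_adj_dom by blast

lemma trace_bounded_right_inverse:
  "\<exists>M\<ge>0. \<forall>p. \<exists>x. (\<gamma>0 x, \<gamma>1 x) = p \<and> norm x \<le> M * norm p"
proof (rule bounded_linear_surj_bounded_preimage)
  show "bounded_linear (\<lambda>x. (\<gamma>0 x, \<gamma>1 x))"
    by (intro bounded_linear_Pair bounded_linear_if_bounded_clinear_map trace0 trace1)
  show "surj (\<lambda>x. (\<gamma>0 x, \<gamma>1 x))"
    unfolding surj_def
  proof
    fix p :: "'k \<times> 'k"
    obtain x where "\<gamma>0 x = fst p" "\<gamma>1 x = snd p"
      using trace_surj by blast
    then show "\<exists>x. p = (\<gamma>0 x, \<gamma>1 x)"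
      by (intro exI[of _ x]) simp
  qed
qed

text \<open>\<open>lift\<close> is a bounded right inverse of \<open>(\<gamma>0, \<gamma>1)\<close>, in general not linear; linearity
  of the traces is recovered from \<open>boundary_form_incl_cong\<close>.\<close>

definition lift_bound :: real where
  "lift_bound = (SOME M. M \<ge> 0 \<and> (\<forall>p. \<exists>x. (\<gamma>0 x, \<gamma>1 x) = p \<and> norm x \<le> M * norm p))"

definition lift :: "'k \<times> 'k \<Rightarrow> 'g" where
  "lift p = (SOME x. \<gamma>0 x = fst p \<and> \<gamma>1 x = snd p \<and> norm x \<le> lift_bound * norm p)"

lemma lift_bound_nonneg: "lift_bound \<ge> 0"
  and lift: "\<gamma>0 (lift p) = fst p" "\<gamma>1 (lift p) = snd p" "norm (lift p) \<le> lift_bound * norm p"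
proof -
  have bound: "lift_bound \<ge> 0 \<and> (\<forall>p. \<exists>x. (\<gamma>0 x, \<gamma>1 x) = p \<and> norm x \<le> lift_bound * norm p)"
    unfolding lift_bound_def by (rule someI_ex) (rule trace_bounded_right_inverse)
  then show "lift_bound \<ge> 0"
    by blast
  have "\<exists>x. \<gamma>0 x = fst p \<and> \<gamma>1 x = snd p \<and> norm x \<le> lift_bound * norm p"
    using bound by (metis fst_conv snd_conv)
  then have "\<gamma>0 (lift p) = fst p \<and> \<gamma>1 (lift p) = snd p \<and> norm (lift p) \<le> lift_bound * norm p"
    unfolding lift_def by (rule someI_ex)
  then show "\<gamma>0 (lift p) = fst p" "\<gamma>1 (lift p) = snd p" "norm (lift p) \<le> lift_bound * norm p"
    by blast+
qed

lemma boundary_form_incl_add: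
  "boundary_form DT T u (\<iota> (v + v')) = boundary_form DT T u (\<iota> v) + boundary_form DT T u (\<iota> v')"
  by (simp add: bounded_clinear_map_add[OF incl] boundary_form_add_right[OF dense_dom])

lemma boundary_form_incl_cscale:
  "boundary_form DT T u (\<iota> (c *\<^sub>C v)) = cnj c * boundary_form DT T u (\<iota> v)"
  by (simp add: bounded_clinear_map_cscale[OF incl] boundary_form_cscale_right[OF dense_dom])

lemma boundary_form_incl_cong:
  assumes "u \<in> adj_dom DT T" and "\<gamma>0 v = \<gamma>0 v'" and "\<gamma>1 v = \<gamma>1 v'"
  shows "boundary_form DT T u (\<iota> v) = boundary_form DT T u (\<iota> v')"
proof -
  have "\<iota> (v - v') \<in> DT"
    using assms(2,3) trace_kernel
    by (auto simp: bounded_clinear_map_diff[OF trace0] bounded_clinear_map_diff[OF trace1])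
  then have "boundary_form DT T u (\<iota> (v - v')) = 0"
    by (rule boundary_form_eq_0[OF dense_dom symmetric assms(1)])
  then show ?thesis
    using boundary_form_incl_add[of u v' "v - v'"] by simp
qed

lemma boundary_form_lift_add:
  assumes "u \<in> adj_dom DT T"
  shows "boundary_form DT T u (\<iota> (lift (p + q)))
       = boundary_form DT T u (\<iota> (lift p)) + boundary_form DT T u (\<iota> (lift q))"
proof -
  have "boundary_form DT T u (\<iota> (lift (p + q))) = boundary_form DT T u (\<iota> (lift p + lift q))"
    using assms
    by (rule boundary_form_incl_cong)
      (simp_all add: lift bounded_clinear_map_add[OF trace0] bounded_clinear_map_add[OF trace1])
  then show ?thesis
    by (simp add: boundary_form_incl_add)
qed

lemma boundary_form_lift_cscale:
  assumes "u \<in> adj_dom DT T"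
  shows "boundary_form DT T u (\<iota> (lift (c *\<^sub>C a, c *\<^sub>C b)))
       = cnj c * boundary_form DT T u (\<iota> (lift (a, b)))"
proof -
  have "boundary_form DT T u (\<iota> (lift (c *\<^sub>C a, c *\<^sub>C b)))
      = boundary_form DT T u (\<iota> (c *\<^sub>C lift (a, b)))"
    using assms
    by (rule boundary_form_incl_cong)
      (simp_all add: lift bounded_clinear_map_cscale[OF trace0] bounded_clinear_map_cscale[OF trace1])
  then show ?thesis
    by (simp add: boundary_form_incl_cscale)
qed

lemma incl_graph_bound: "\<exists>C\<ge>0. \<forall>x. norm (\<iota> x) + norm (adj DT T (\<iota> x)) \<le> C * norm x"
proof -
  obtain Ci where Ci: "Ci \<ge> 0" "\<And>x. norm (\<iota> x) \<le> norm x * Ci"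
    using bounded_linear.nonneg_bounded[OF bounded_linear_if_bounded_clinear_map[OF incl]] by blast
  obtain Ca where "\<And>x. norm (adj DT T (\<iota> x)) \<le> Ca * norm x"
    using adj_incl_bounded by blast
  then have Ca: "norm (adj DT T (\<iota> x)) \<le> max Ca 0 * norm x" for x
    by (metis max.cobounded1 mult_right_mono norm_ge_zero order_trans)
  have "norm (\<iota> x) + norm (adj DT T (\<iota> x)) \<le> (Ci + max Ca 0) * norm x" for x
    using add_mono[OF Ci(2) Ca, of x x] by (simp add: algebra_simps)
  with Ci(1) show ?thesis
    by (intro exI[of _ "Ci + max Ca 0"]) auto
qed

lemma boundary_form_lift_bound:
  "\<exists>C. \<forall>u p. cmod (boundary_form DT T u (\<iota> (lift p))) \<le> C * graph_norm (adj DT T) u * norm p"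
proof -
  obtain C where C: "C \<ge> 0" "\<And>x. norm (\<iota> x) + norm (adj DT T (\<iota> x)) \<le> C * norm x"
    using incl_graph_bound by blast
  have "cmod (boundary_form DT T u (\<iota> (lift p))) \<le> C * lift_bound * graph_norm (adj DT T) u * norm p"
    for u p
  proof -
    have "cmod (boundary_form DT T u (\<iota> (lift p)))
        \<le> graph_norm (adj DT T) u * (norm (\<iota> (lift p)) + norm (adj DT T (\<iota> (lift p))))"
      by (rule boundary_form_bound)
    also have "\<dots> \<le> graph_norm (adj DT T) u * (C * (lift_bound * norm p))"
      using C lift(3)[of p]
      by (intro mult_left_mono order_trans[OF C(2)] graph_norm_nonneg) auto
    finally show ?thesis
      by (simp add: mult_ac)
  qed
  then show ?thesis
    by blast
qed

definition \<Gamma>0 :: "'h \<Rightarrow> 'k \<Rightarrow> complex" where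
  "\<Gamma>0 u k = - boundary_form DT T u (\<iota> (lift (0, k)))"

definition \<Gamma>1 :: "'h \<Rightarrow> 'k \<Rightarrow> complex" where
  "\<Gamma>1 u k = boundary_form DT T u (\<iota> (lift (k, 0)))"

lemma green_formula:
  assumes "u \<in> adj_dom DT T"
  shows "boundary_form DT T u (\<iota> v) = \<Gamma>1 u (\<gamma>0 v) - \<Gamma>0 u (\<gamma>1 v)"
proof -
  have "boundary_form DT T u (\<iota> v) = boundary_form DT T u (\<iota> (lift (\<gamma>0 v, \<gamma>1 v)))"
    using assms by (rule boundary_form_incl_cong) (simp_all add: lift)
  then show ?thesis
    using boundary_form_lift_add[OF assms, of "(\<gamma>0 v, 0)" "(0, \<gamma>1 v)"]
    by (simp add: \<Gamma>0_def \<Gamma>1_def)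
qed

lemma \<Gamma>_antidual:
  assumes "u \<in> adj_dom DT T"
  shows "\<Gamma>0 u \<in> antidual" and "\<Gamma>1 u \<in> antidual"
proof -
  obtain C where C: "\<And>p. cmod (boundary_form DT T u (\<iota> (lift p))) \<le> C * graph_norm (adj DT T) u * norm p"
    using boundary_form_lift_bound by blast
  show "\<Gamma>0 u \<in> antidual"
  proof (rule antidualI)
    show "\<Gamma>0 u (x + y) = \<Gamma>0 u x + \<Gamma>0 u y" for x y
      using boundary_form_lift_add[OF assms, of "(0, x)" "(0, y)"] by (simp add: \<Gamma>0_def)
    show "\<Gamma>0 u (c *\<^sub>C x) = cnj c * \<Gamma>0 u x" for c x
      using boundary_form_lift_cscale[OF assms, of c 0 x] by (simp add: \<Gamma>0_def)
    show "cmod (\<Gamma>0 u x) \<le> C * graph_norm (adj DT T) u * norm x" for x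
      using C[of "(0, x)"] by (simp add: \<Gamma>0_def norm_Pair)
  qed
  show "\<Gamma>1 u \<in> antidual"
  proof (rule antidualI)
    show "\<Gamma>1 u (x + y) = \<Gamma>1 u x + \<Gamma>1 u y" for x y
      using boundary_form_lift_add[OF assms, of "(x, 0)" "(y, 0)"] by (simp add: \<Gamma>1_def)
    show "\<Gamma>1 u (c *\<^sub>C x) = cnj c * \<Gamma>1 u x" for c x
      using boundary_form_lift_cscale[OF assms, of c x 0] by (simp add: \<Gamma>1_def)
    show "cmod (\<Gamma>1 u x) \<le> C * graph_norm (adj DT T) u * norm x" for x
      using C[of "(x, 0)"] by (simp add: \<Gamma>1_def norm_Pair)
  qed
qed

lemma \<Gamma>_add:
  assumes "u \<in> adj_dom DT T" and "u' \<in> adj_dom DT T"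
  shows "\<Gamma>0 (u + u') k = \<Gamma>0 u k + \<Gamma>0 u' k" and "\<Gamma>1 (u + u') k = \<Gamma>1 u k + \<Gamma>1 u' k"
  using assms by (simp_all add: \<Gamma>0_def \<Gamma>1_def boundary_form_add_left[OF dense_dom])

lemma \<Gamma>_cscale:
  assumes "u \<in> adj_dom DT T"
  shows "\<Gamma>0 (c *\<^sub>C u) k = c * \<Gamma>0 u k" and "\<Gamma>1 (c *\<^sub>C u) k = c * \<Gamma>1 u k"
  using assms by (simp_all add: \<Gamma>0_def \<Gamma>1_def boundary_form_cscale_left[OF dense_dom])

lemma \<Gamma>_bound:
  "\<exists>C. \<forall>u\<in>adj_dom DT T. \<forall>k. cmod (\<Gamma>0 u k) \<le> C * graph_norm (adj DT T) u * norm k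
             \<and> cmod (\<Gamma>1 u k) \<le> C * graph_norm (adj DT T) u * norm k"
proof -
  obtain C where "\<And>u p. cmod (boundary_form DT T u (\<iota> (lift p))) \<le> C * graph_norm (adj DT T) u * norm p"
    using boundary_form_lift_bound by blast
  from this[of _ "(0, _)"] this[of _ "(_, 0)"] show ?thesis
    by (intro exI[of _ C] allI conjI) (simp_all add: \<Gamma>0_def \<Gamma>1_def norm_Pair)
qed

lemma \<Gamma>_incl:
  "\<Gamma>0 (\<iota> x) k = cinner (j (\<gamma>0 x)) (j k)" "\<Gamma>1 (\<iota> x) k = cinner (j (\<gamma>1 x)) (j k)"
  using lagrange by (simp_all add: \<Gamma>0_def \<Gamma>1_def lift bounded_clinear_map_zero[OF boundary_incl])

end

theorem theorem4p3:
  fixes T :: "'h::chilbert \<Rightarrow> 'h" and DT :: "'h set"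
    and \<iota> :: "'g::chilbert \<Rightarrow> 'h"
    and j :: "'k::chilbert \<Rightarrow> 'd::chilbert"
    and \<gamma>0 \<gamma>1 :: "'g \<Rightarrow> 'k"
  assumes sepH0: "separable_space (euclidean :: 'h topology)"
    and sepKd: "separable_space (euclidean :: 'd topology)"
    and T_sub: "csubspace DT" and T_lin: "clinear_on DT T"
    and T_dense: "closure DT = UNIV"
    and T_closed: "closed_op DT T" and T_sym: "symmetric_op DT T"
    and H1_incl: "bounded_clinear_map \<iota>" "inj \<iota>"
    and H1_dense: "closure (range \<iota>) = UNIV"
    and K_incl: "bounded_clinear_map j" "inj j"
    and K_dense: "closure (range j) = UNIV"
    and H1_sub: "range \<iota> \<subseteq> adj_dom DT T"
    and H1_graph_dense: "\<forall>u\<in>adj_dom DT T. \<forall>e>0. \<exists>x. graph_norm (adj DT T) (\<iota> x - u) < e"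
    and Ts_bdd: "\<exists>C. \<forall>x. norm (adj DT T (\<iota> x)) \<le> C * norm x"
    and gam_bdd: "bounded_clinear_map \<gamma>0" "bounded_clinear_map \<gamma>1"
    and gam_surj: "\<forall>a b. \<exists>x. \<gamma>0 x = a \<and> \<gamma>1 x = b"
    and ker_dense: "closure (\<iota> ` {x. \<gamma>0 x = 0 \<and> \<gamma>1 x = 0}) = UNIV"
    and dom_T: "DT = \<iota> ` {x. \<gamma>0 x = 0 \<and> \<gamma>1 x = 0}"
    and lagrange: "\<forall>u v. cinner (adj DT T (\<iota> u)) (\<iota> v) - cinner (\<iota> u) (adj DT T (\<iota> v))
                       = cinner (j (\<gamma>1 u)) (j (\<gamma>0 v)) - cinner (j (\<gamma>0 u)) (j (\<gamma>1 v))"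
  shows "\<exists>\<Gamma>0 \<Gamma>1 :: 'h \<Rightarrow> 'k \<Rightarrow> complex.
     (\<forall>u\<in>adj_dom DT T. \<Gamma>0 u \<in> antidual \<and> \<Gamma>1 u \<in> antidual)
   \<and> (\<forall>u\<in>adj_dom DT T. \<forall>v\<in>adj_dom DT T. \<forall>k.
        \<Gamma>0 (u + v) k = \<Gamma>0 u k + \<Gamma>0 v k \<and> \<Gamma>1 (u + v) k = \<Gamma>1 u k + \<Gamma>1 v k)
   \<and> (\<forall>c. \<forall>u\<in>adj_dom DT T. \<forall>k. \<Gamma>0 (c *\<^sub>C u) k = c * \<Gamma>0 u k \<and> \<Gamma>1 (c *\<^sub>C u) k = c * \<Gamma>1 u k)
   \<and> (\<exists>C. \<forall>u\<in>adj_dom DT T. \<forall>k.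
        cmod (\<Gamma>0 u k) \<le> C * graph_norm (adj DT T) u * norm k
      \<and> cmod (\<Gamma>1 u k) \<le> C * graph_norm (adj DT T) u * norm k)
   \<and> (\<forall>x k. \<Gamma>0 (\<iota> x) k = cinner (j (\<gamma>0 x)) (j k) \<and> \<Gamma>1 (\<iota> x) k = cinner (j (\<gamma>1 x)) (j k))
   \<and> (\<forall>u\<in>adj_dom DT T. \<forall>v.
        cinner (adj DT T u) (\<iota> v) - cinner u (adj DT T (\<iota> v))
          = \<Gamma>1 u (\<gamma>0 v) - \<Gamma>0 u (\<gamma>1 v))"
proof -
  interpret abstract_boundary_problem T DT \<iota> j \<gamma>0 \<gamma>1
  proof
    show "\<iota> ` {x. \<gamma>0 x = 0 \<and> \<gamma>1 x = 0} \<subseteq> DT"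
      by (simp add: dom_T)
    show "\<forall>u v. boundary_form DT T (\<iota> u) (\<iota> v)
            = cinner (j (\<gamma>1 u)) (j (\<gamma>0 v)) - cinner (j (\<gamma>0 u)) (j (\<gamma>1 v))"
      using lagrange by (simp add: boundary_form_def)
  qed (fact T_dense T_sym H1_incl(1) H1_sub Ts_bdd gam_bdd gam_surj K_incl(1))+
  show ?thesis
    by (rule exI[of _ \<Gamma>0], rule exI[of _ \<Gamma>1],
        intro conjI ballI allI \<Gamma>_antidual \<Gamma>_add \<Gamma>_cscale \<Gamma>_incl \<Gamma>_bound)
      (simp_all add: green_formula[unfolded boundary_form_def])
qed

end
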